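(* Let $U$ be a machine such that for every machine $V$ there exists a total computable length-bounded function $h$ such that $U(h(x))=V(x)$ whenever $V(x)$ is defined (with no requirement on $U(h(x))$ when $V(x)$ is undefined). Then $U$ is effectively optimal.
   Context: A machine is a partial computable function from binary strings to binary strings. A total function $h$ on strings is length-bounded if $|h(x)|\le|x|+c$ for some $c$ and all $x$. $U$ is effectively optimal if for every machine $V$ there is a total computable length-bounded $h$ with $V(x)=U(h(x))$ for all $x$ (both sides undefined, or both defined and equal). *)

theory Defs
  imports Main
begin

datatype recf =
    Zero
  | Succ
  | Proj nat
  | Comp recf "recf list"
  | Prim recf recf
  | Mu recf

inductive eval :: "recf \<Rightarrow> nat list \<Rightarrow> nat \<Rightarrow> bool" where
  eval_Zero: "eval Zero xs 0"
| eval_Succ: "eval Succ (x # xs) (Suc x)"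
| eval_Proj: "i < length xs \<Longrightarrow> eval (Proj i) xs (xs ! i)"
| eval_Comp: "list_all2 (\<lambda>g y. eval g xs y) gs ys \<Longrightarrow> eval f ys z \<Longrightarrow> eval (Comp f gs) xs z"
| eval_Prim0: "eval f xs y \<Longrightarrow> eval (Prim f g) (0 # xs) y"
| eval_PrimS: "eval (Prim f g) (n # xs) y \<Longrightarrow> eval g (n # y # xs) z \<Longrightarrow> eval (Prim f g) (Suc n # xs) z"
| eval_Mu: "eval f (n # xs) 0 \<Longrightarrow> (\<forall>m<n. \<exists>y. eval f (m # xs) (Suc y)) \<Longrightarrow> eval (Mu f) xs n"

type_synonym bstring = "bool list"

text \<open>Standard bijection between binary strings and natural numbers
  (empty string \<mapsto> 0, bijective base-2 numeration).\<close>

fun enc :: "bstring \<Rightarrow> nat" where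
  "enc [] = 0"
| "enc (b # xs) = 2 * enc xs + (if b then 2 else 1)"

definition machine :: "(bstring \<Rightarrow> bstring option) \<Rightarrow> bool" where
  "machine V \<longleftrightarrow>
     (\<exists>r. \<forall>x m. eval r [enc x] m \<longleftrightarrow> (\<exists>y. V x = Some y \<and> m = enc y))"

definition total_computable :: "(bstring \<Rightarrow> bstring) \<Rightarrow> bool" where
  "total_computable h \<longleftrightarrow> machine (\<lambda>x. Some (h x))"

definition length_bounded :: "(bstring \<Rightarrow> bstring) \<Rightarrow> bool" where
  "length_bounded h \<longleftrightarrow> (\<exists>c. \<forall>x. length (h x) \<le> length x + c)"

definition effectively_optimal :: "(bstring \<Rightarrow> bstring option) \<Rightarrow> bool" where
  "effectively_optimal U \<longleftrightarrow>
     (\<forall>V. machine V \<longrightarrow>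
        (\<exists>h. total_computable h \<and> length_bounded h \<and> (\<forall>x. V x = U (h x))))"

end

theory Submission
  imports Defs "HOL-Library.Nat_Bijection"
begin

text \<open>Given V, let W be the machine that on input 1^e 0 x races two searches: for a halting
  computation of V on x, and for a halting computation of program e on x followed by one of U on
  its output z. If the first search wins W outputs V(x), if the second wins W outputs a string
  different from U(z). The hypothesis gives a total computable length-bounded h with
  U(h w) = W(w) wherever W halts, and Kleene's recursion theorem gives a program e computing
  x \<mapsto> h(1^e 0 x). For this e the second search can never win, since its answer would differ
  from U(h(1^e 0 x)) = W(1^e 0 x); so U(h(1^e 0 x)) = V(x) for every x, defined or not.
  The searches run over certificates: coded lists of derivation nodes of the semantics eval,
  whose validity is primitive recursive.\<close>

lemma list_all2_functional: "list_all2 (\<lambda>g y. P g y \<and> (\<forall>y'. P g y' \<longrightarrow> y = y')) gs ys \<Longrightarrow> list_all2 P gs ys' \<Longrightarrow> ys = ys'"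
proof (induction gs ys arbitrary: ys' rule: list_all2_induct)
  case Nil then show ?case by simp
next
  case (Cons g gs y ys)
  from Cons.prems obtain y' ys2 where "ys' = y' # ys2" "P g y'" "list_all2 P gs ys2"
    by (cases ys') auto
  then show ?case using Cons by auto
qed

inductive_cases ZeroE[elim!]: "eval Zero xs y"
inductive_cases SuccE[elim!]: "eval Succ xs y"
inductive_cases ProjE[elim!]: "eval (Proj i) xs y"
inductive_cases CompE[elim!]: "eval (Comp f gs) xs y"
inductive_cases PrimE: "eval (Prim f g) xs y"
inductive_cases MuE[elim!]: "eval (Mu f) xs y"

lemma eval_det: "eval f xs y \<Longrightarrow> eval f xs y' \<Longrightarrow> y = y'"
proof (induction arbitrary: y' rule: eval.induct)
  case (eval_Zero xs) then show ?case by auto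
next
  case (eval_Succ x xs) then show ?case by auto
next
  case (eval_Proj i xs) then show ?case by auto
next
  case (eval_Comp xs gs ys f z)
  from eval_Comp.prems obtain ys' where a: "list_all2 (\<lambda>g y. eval g xs y) gs ys'" and b: "eval f ys' y'"
    by blast
  have "ys = ys'" by (rule list_all2_functional[OF eval_Comp(1) a])
  then show ?case using eval_Comp.IH b by simp
next
  case (eval_Prim0 f xs y g) from eval_Prim0.prems show ?case by (cases rule: PrimE) (use eval_Prim0.IH in auto)
next
  case (eval_PrimS f g n xs y z)
  from eval_PrimS.prems obtain y2 where "eval (Prim f g) (n # xs) y2" "eval g (n # y2 # xs) y'"
    by (cases rule: PrimE) auto
  then show ?case using eval_PrimS.IH by auto
next
  case (eval_Mu f n xs)
  from eval_Mu.prems obtain n' where n': "y' = n'" "eval f (n' # xs) 0" "\<forall>m<n'. \<exists>y. eval f (m # xs) (Suc y)"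
    by blast
  have IH1: "\<And>y'. eval f (n # xs) y' \<Longrightarrow> 0 = y'" using eval_Mu.IH(1) by blast
  have IH2: "\<And>m. m < n \<Longrightarrow> \<exists>y. eval f (m # xs) (Suc y) \<and> (\<forall>y'. eval f (m # xs) y' \<longrightarrow> Suc y = y')"
    using eval_Mu.IH(2) by blast
  show ?case
  proof (rule ccontr)
    assume "n \<noteq> y'"
    then consider "n < n'" | "n' < n" using n' by linarith
    then show False
    proof cases
      case 1 then obtain y where "eval f (n # xs) (Suc y)" using n' by auto
      from IH1[OF this] show False by simp
    next
      case 2 then obtain y where "\<forall>y'. eval f (n' # xs) y' \<longrightarrow> Suc y = y'"
        using IH2 by blast
      then show False using n'(2) by auto
    qed
  qed
qed

declare ZeroE[rule del] SuccE[rule del] ProjE[rule del] CompE[rule del] MuE[rule del]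

section \<open>Total recursive functions of an environment\<close>

definition rec_fun :: "nat \<Rightarrow> ((nat \<Rightarrow> nat) \<Rightarrow> nat) \<Rightarrow> bool" where
  "rec_fun n F \<longleftrightarrow> (\<exists>r. \<forall>e. eval r (map e [0..<n]) (F e))"

definition rec_pred :: "nat \<Rightarrow> ((nat \<Rightarrow> nat) \<Rightarrow> bool) \<Rightarrow> bool" where
  "rec_pred n P \<longleftrightarrow> rec_fun n (\<lambda>e. if P e then 1 else 0)"

definition env_cons :: "nat \<Rightarrow> (nat \<Rightarrow> nat) \<Rightarrow> nat \<Rightarrow> nat" where
  "env_cons k e i = (case i of 0 \<Rightarrow> k | Suc j \<Rightarrow> e j)"

lemma env_cons_simps[simp]: "env_cons k e 0 = k" "env_cons k e (Suc i) = e i"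
  by (simp_all add: env_cons_def)

lemma map_upt_Suc_shift: "map e [0..<Suc n] = e 0 # map (\<lambda>i. e (Suc i)) [0..<n]"
  by (induction n) auto

lemma map_env_cons: "map (env_cons k e) [0..<Suc n] = k # map e [0..<n]"
  by (simp only: map_upt_Suc_shift env_cons_simps)

lemma rec_fun_zero: "rec_fun n (\<lambda>e. 0)"
  unfolding rec_fun_def by (auto intro: eval_Zero)

lemma rec_fun_var: "i < n \<Longrightarrow> rec_fun n (\<lambda>e. e i)"
  unfolding rec_fun_def
  by (rule exI[of _ "Proj i"]) (metis (no_types, lifting) add_0 diff_zero eval_Proj length_map length_upt nth_map_upt)

lemma rec_fun_Suc: "rec_fun n f \<Longrightarrow> rec_fun n (\<lambda>e. Suc (f e))"
  unfolding rec_fun_def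
proof -
  assume "\<exists>r. \<forall>e. eval r (map e [0..<n]) (f e)"
  then obtain r where r: "\<forall>e. eval r (map e [0..<n]) (f e)" by blast
  show "\<exists>r. \<forall>e. eval r (map e [0..<n]) (Suc (f e))"
    by (rule exI[of _ "Comp Succ [r]"]) (auto intro!: eval_Comp eval_Succ simp: r)
qed

lemma rec_fun_comp:
  assumes "rec_fun m f" "\<forall>j<m. rec_fun n (g j)"
  shows "rec_fun n (\<lambda>e. f (\<lambda>j. g j e))"
proof -
  obtain r where r: "\<forall>e. eval r (map e [0..<m]) (f e)" using assms(1) unfolding rec_fun_def by blast
  have "\<forall>j. \<exists>s. j < m \<longrightarrow> (\<forall>e. eval s (map e [0..<n]) (g j e))" using assms(2) unfolding rec_fun_def by blast
  then obtain R where R: "\<And>j e. j < m \<Longrightarrow> eval (R j) (map e [0..<n]) (g j e)" by metis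
  show ?thesis unfolding rec_fun_def
  proof (rule exI[of _ "Comp r (map R [0..<m])"], intro allI)
    fix e
    have "list_all2 (\<lambda>g y. eval g (map e [0..<n]) y) (map R [0..<m]) (map (\<lambda>j. g j e) [0..<m])"
      by (auto simp: list_all2_conv_all_nth R)
    moreover have "eval r (map (\<lambda>j. g j e) [0..<m]) (f (\<lambda>j. g j e))" using r by blast
    ultimately show "eval (Comp r (map R [0..<m])) (map e [0..<n]) (f (\<lambda>j. g j e))"
      by (rule eval_Comp)
  qed
qed

lemma rec_fun_comp2:
  assumes "rec_fun 2 f" "rec_fun n a" "rec_fun n b"
  shows "rec_fun n (\<lambda>e. f (\<lambda>j. if j = 0 then a e else b e))"
proof -
  have "rec_fun n (\<lambda>e. f (\<lambda>j. (\<lambda>j e. if j = 0 then a e else b e) j e))"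
    by (rule rec_fun_comp[OF assms(1)]) (auto simp: assms(2,3) less_2_cases_iff)
  then show ?thesis by simp
qed

lemma rec_fun_comp1:
  assumes "rec_fun 1 f" "rec_fun n a"
  shows "rec_fun n (\<lambda>e. f (\<lambda>j. a e))"
  using rec_fun_comp[of 1 f n "\<lambda>j. a"] assms by auto

fun primrec_env :: "((nat\<Rightarrow>nat)\<Rightarrow>nat) \<Rightarrow> ((nat\<Rightarrow>nat)\<Rightarrow>nat) \<Rightarrow> nat \<Rightarrow> (nat\<Rightarrow>nat) \<Rightarrow> nat" where
  "primrec_env f g 0 e = f e"
| "primrec_env f g (Suc k) e = g (env_cons k (env_cons (primrec_env f g k e) e))"

lemma rec_fun_primrec_env:
  assumes "rec_fun n f" "rec_fun (Suc (Suc n)) g"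
  shows "rec_fun (Suc n) (\<lambda>e. primrec_env f g (e 0) (\<lambda>i. e (Suc i)))"
proof -
  obtain r where r: "\<forall>e. eval r (map e [0..<n]) (f e)" using assms(1) unfolding rec_fun_def by blast
  obtain s where s: "\<forall>e. eval s (map e [0..<Suc (Suc n)]) (g e)" using assms(2) unfolding rec_fun_def by blast
  have k: "eval (Prim r s) (k # map e [0..<n]) (primrec_env f g k e)" for k e
  proof (induction k)
    case 0 then show ?case using r by (auto intro: eval_Prim0)
  next
    case (Suc k)
    have "eval s (k # primrec_env f g k e # map e [0..<n]) (primrec_env f g (Suc k) e)"
      using s[rule_format, of "env_cons k (env_cons (primrec_env f g k e) e)"] by (simp only: map_env_cons primrec_env.simps)
    then show ?case using Suc by (auto intro: eval_PrimS)
  qed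
  show ?thesis unfolding rec_fun_def
    by (rule exI[of _ "Prim r s"]) (simp only: map_upt_Suc_shift k, simp)
qed

lemma rec_fun_cong: "rec_fun n F \<Longrightarrow> (\<And>e. F e = G e) \<Longrightarrow> rec_fun n G"
  by (metis ext)

lemma rec_pred_cong: "rec_pred n P \<Longrightarrow> (\<And>e. P e = Q e) \<Longrightarrow> rec_pred n Q"
  unfolding rec_pred_def by (erule rec_fun_cong) simp

lemma rec_fun_const: "rec_fun n (\<lambda>e. c)"
proof (induction c)
  case 0 then show ?case by (rule rec_fun_zero)
next
  case (Suc c) then show ?case by (rule rec_fun_Suc)
qed

lemma rec_fun_subst_env_cons: "rec_fun (Suc n) H \<Longrightarrow> rec_fun n a \<Longrightarrow> rec_fun n (\<lambda>e. H (env_cons (a e) e))"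
proof -
  assume H: "rec_fun (Suc n) H" and a: "rec_fun n a"
  have "rec_fun n (\<lambda>e. H (\<lambda>j. (\<lambda>j e. case j of 0 \<Rightarrow> a e | Suc i \<Rightarrow> e i) j e))"
    apply (rule rec_fun_comp[OF H])
    apply (intro allI impI)
    subgoal for j by (cases j) (auto simp: a rec_fun_var)
    done
  moreover have "(\<lambda>j. case j of 0 \<Rightarrow> a e | Suc i \<Rightarrow> e i) = env_cons (a e) e" for e
    by (auto simp: env_cons_def)
  ultimately show ?thesis by simp
qed

lemma primrec_env_add: "primrec_env (\<lambda>e. e 0) (\<lambda>e. Suc (e (Suc 0))) k e = k + e 0"
  by (induction k) auto

lemma rec_fun_add_vars: "rec_fun 2 (\<lambda>e. e 0 + e 1)"
proof -
  have "rec_fun (Suc 1) (\<lambda>e. primrec_env (\<lambda>e. e 0) (\<lambda>e. Suc (e (Suc 0))) (e 0) (\<lambda>i. e (Suc i)))"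
    by (rule rec_fun_primrec_env) (auto intro!: rec_fun_var rec_fun_Suc)
  then show ?thesis by (simp add: primrec_env_add numeral_2_eq_2)
qed

lemma rec_fun_add: "rec_fun n a \<Longrightarrow> rec_fun n b \<Longrightarrow> rec_fun n (\<lambda>e. a e + b e)"
  using rec_fun_comp2[OF rec_fun_add_vars] by simp

lemma primrec_env_pred: "primrec_env (\<lambda>e. 0) (\<lambda>e. e 0) k e = k - 1"
  by (cases k) auto

lemma rec_fun_pred_var: "rec_fun 1 (\<lambda>e. e 0 - 1)"
proof -
  have "rec_fun (Suc 0) (\<lambda>e. primrec_env (\<lambda>e. 0) (\<lambda>e. e 0) (e 0) (\<lambda>i. e (Suc i)))"
    by (rule rec_fun_primrec_env) (auto intro!: rec_fun_var rec_fun_zero)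
  then show ?thesis by (simp add: primrec_env_pred)
qed

lemma primrec_env_sub: "primrec_env (\<lambda>e. e 0) (\<lambda>e. e (Suc 0) - Suc 0) k e = e 0 - k"
  by (induction k) auto

lemma rec_fun_sub_vars: "rec_fun 2 (\<lambda>e. e 1 - e 0)"
proof -
  have "rec_fun (Suc 1) (\<lambda>e. primrec_env (\<lambda>e. e 0) (\<lambda>e. e (Suc 0) - Suc 0) (e 0) (\<lambda>i. e (Suc i)))"
    by (rule rec_fun_primrec_env) (auto intro!: rec_fun_var rec_fun_comp1[OF rec_fun_pred_var, of _ "\<lambda>e. e (Suc 0)", simplified])
  then show ?thesis by (simp add: primrec_env_sub numeral_2_eq_2)
qed

lemma rec_fun_sub: "rec_fun n a \<Longrightarrow> rec_fun n b \<Longrightarrow> rec_fun n (\<lambda>e. a e - b e)"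
  using rec_fun_comp2[OF rec_fun_sub_vars, of n b a] by simp

lemma primrec_env_mult: "primrec_env (\<lambda>e. 0) (\<lambda>e. e (Suc 0) + e (Suc (Suc 0))) k e = k * e 0"
  by (induction k) auto

lemma rec_fun_mult_vars: "rec_fun 2 (\<lambda>e. e 0 * e 1)"
proof -
  have "rec_fun (Suc 1) (\<lambda>e. primrec_env (\<lambda>e. 0) (\<lambda>e. e (Suc 0) + e (Suc (Suc 0))) (e 0) (\<lambda>i. e (Suc i)))"
    by (rule rec_fun_primrec_env) (auto intro!: rec_fun_var rec_fun_zero rec_fun_add)
  then show ?thesis by (simp add: primrec_env_mult numeral_2_eq_2)
qed

lemma rec_fun_mult: "rec_fun n a \<Longrightarrow> rec_fun n b \<Longrightarrow> rec_fun n (\<lambda>e. a e * b e)"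
  using rec_fun_comp2[OF rec_fun_mult_vars] by simp

lemma rec_pred_less: "rec_fun n a \<Longrightarrow> rec_fun n b \<Longrightarrow> rec_pred n (\<lambda>e. a e < b e)"
  unfolding rec_pred_def
  by (rule rec_fun_cong[of _ "\<lambda>e. 1 - (1 - (b e - a e))"]) (auto intro!: rec_fun_sub rec_fun_const)

lemma rec_pred_not: "rec_pred n P \<Longrightarrow> rec_pred n (\<lambda>e. \<not> P e)"
  unfolding rec_pred_def
  by (rule rec_fun_cong[of _ "\<lambda>e. 1 - (if P e then 1 else 0)"]) (auto intro!: rec_fun_sub rec_fun_const)

lemma rec_pred_and: "rec_pred n P \<Longrightarrow> rec_pred n Q \<Longrightarrow> rec_pred n (\<lambda>e. P e \<and> Q e)"
  unfolding rec_pred_def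
  by (rule rec_fun_cong[of _ "\<lambda>e. (if P e then 1 else 0) * (if Q e then 1 else 0)"]) (auto intro!: rec_fun_mult)

lemma rec_pred_or: "rec_pred n P \<Longrightarrow> rec_pred n Q \<Longrightarrow> rec_pred n (\<lambda>e. P e \<or> Q e)"
  apply (rule rec_pred_cong[of _ "\<lambda>e. \<not> (\<not> P e \<and> \<not> Q e)"])
   apply (intro rec_pred_not rec_pred_and; assumption)
  by simp

lemma rec_pred_imp: "rec_pred n P \<Longrightarrow> rec_pred n Q \<Longrightarrow> rec_pred n (\<lambda>e. P e \<longrightarrow> Q e)"
  apply (rule rec_pred_cong[of _ "\<lambda>e. \<not> P e \<or> Q e"])
   apply (intro rec_pred_not rec_pred_or; assumption)
  by simp

lemma rec_pred_le: "rec_fun n a \<Longrightarrow> rec_fun n b \<Longrightarrow> rec_pred n (\<lambda>e. a e \<le> b e)"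
  by (rule rec_pred_cong[of _ "\<lambda>e. \<not> b e < a e"]) (auto intro!: rec_pred_not rec_pred_less)

lemma rec_pred_eq: "rec_fun n a \<Longrightarrow> rec_fun n b \<Longrightarrow> rec_pred n (\<lambda>e. a e = b e)"
  by (rule rec_pred_cong[of _ "\<lambda>e. a e \<le> b e \<and> b e \<le> a e"]) (auto intro!: rec_pred_and rec_pred_le)

lemma rec_pred_const: "rec_pred n (\<lambda>e. c)"
  unfolding rec_pred_def by (cases c) (auto intro: rec_fun_const)

lemma rec_fun_if: "rec_pred n P \<Longrightarrow> rec_fun n a \<Longrightarrow> rec_fun n b \<Longrightarrow> rec_fun n (\<lambda>e. if P e then a e else b e)"
  unfolding rec_pred_def
  apply (rule rec_fun_cong[of _ "\<lambda>e. (if P e then 1 else 0) * a e + (1 - (if P e then 1 else 0)) * b e"])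
   apply (rule rec_fun_add; rule rec_fun_mult; (rule rec_fun_sub)?; (rule rec_fun_const)?; assumption)
  by simp

definition bounded_min :: "nat \<Rightarrow> (nat \<Rightarrow> bool) \<Rightarrow> nat" where
  "bounded_min a P = (if \<exists>k<a. P k then (LEAST k. P k) else a)"

fun bounded_min_rec :: "(nat \<Rightarrow> bool) \<Rightarrow> nat \<Rightarrow> nat" where
  "bounded_min_rec P 0 = 0"
| "bounded_min_rec P (Suc k) = (if bounded_min_rec P k < k then bounded_min_rec P k else if P k then k else Suc k)"

lemma bounded_min_rec_eq: "bounded_min_rec P k = bounded_min k P"
proof (induction k)
  case 0 then show ?case by (simp add: bounded_min_def)
next
  case (Suc k)
  show ?case
  proof (cases "\<exists>j<k. P j")
    case True
    then obtain j where j: "j < k" "P j" by blast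
    have "(LEAST j. P j) \<le> j" using j(2) by (rule Least_le)
    then have "(LEAST j. P j) < k" using j(1) by simp
    moreover have "\<exists>j<Suc k. P j" using j less_SucI by blast
    ultimately show ?thesis using Suc True by (simp add: bounded_min_def)
  next
    case False
    then have "bounded_min_rec P k = k" using Suc False by (simp add: bounded_min_def)
    moreover have "P k \<Longrightarrow> (LEAST j. P j) = k" using False
      by (intro Least_equality) (auto simp: not_less[symmetric])
    ultimately show ?thesis using False by (auto simp: bounded_min_def less_Suc_eq)
  qed
qed

lemma primrec_env_bounded_min_rec: "primrec_env (\<lambda>e. 0) (\<lambda>e. if e (Suc 0) < e 0 then e (Suc 0) else if P (e 0) (\<lambda>i. e (Suc (Suc i))) then e 0 else Suc (e 0)) k e
  = bounded_min_rec (\<lambda>k. P k e) k"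
  by (induction k) auto

lemma rec_fun_bounded_min:
  assumes P: "rec_pred (Suc n) (\<lambda>e. P (e 0) (\<lambda>i. e (Suc i)))" and a: "rec_fun n a"
  shows "rec_fun n (\<lambda>e. bounded_min (a e) (\<lambda>k. P k e))"
proof -
  have P2: "rec_pred (Suc (Suc n)) (\<lambda>e. P (e 0) (\<lambda>i. e (Suc (Suc i))))"
  proof -
    have "rec_fun (Suc (Suc n)) (\<lambda>e. (\<lambda>e. if P (e 0) (\<lambda>i. e (Suc i)) then 1 else 0)
         (\<lambda>j. (\<lambda>j e. case j of 0 \<Rightarrow> e 0 | Suc i \<Rightarrow> e (Suc (Suc i))) j e))"
      apply (rule rec_fun_comp[OF P[unfolded rec_pred_def]])
      apply (intro allI impI)
      subgoal for j by (cases j) (auto intro!: rec_fun_var)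
      done
    then show ?thesis unfolding rec_pred_def by simp
  qed
  have "rec_fun (Suc n) (\<lambda>e. primrec_env (\<lambda>e. 0) (\<lambda>e. if e (Suc 0) < e 0 then e (Suc 0) else if P (e 0) (\<lambda>i. e (Suc (Suc i))) then e 0 else Suc (e 0)) (e 0) (\<lambda>i. e (Suc i)))"
    by (rule rec_fun_primrec_env) (auto intro!: rec_fun_zero rec_fun_if rec_pred_less rec_fun_var rec_fun_Suc P2)
  from rec_fun_subst_env_cons[OF this a] show ?thesis by (simp add: primrec_env_bounded_min_rec bounded_min_rec_eq)
qed

lemma rec_pred_ex:
  assumes P: "rec_pred (Suc n) (\<lambda>e. P (e 0) (\<lambda>i. e (Suc i)))" and a: "rec_fun n a"
  shows "rec_pred n (\<lambda>e. \<exists>k<a e. P k e)"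
proof -
  have "rec_pred n (\<lambda>e. bounded_min (a e) (\<lambda>k. P k e) < a e)"
    by (intro rec_pred_less rec_fun_bounded_min P a)
  moreover have "(bounded_min a (\<lambda>k. Q k) < a) = (\<exists>k<a. Q k)" for a Q
  proof
    assume "bounded_min a (\<lambda>k. Q k) < a"
    then show "\<exists>k<a. Q k" unfolding bounded_min_def by (cases "\<exists>k<a. Q k") auto
  next
    assume "\<exists>k<a. Q k"
    then obtain k where k: "k < a" "Q k" by blast
    have "(LEAST k. Q k) \<le> k" using k(2) by (rule Least_le)
    then show "bounded_min a (\<lambda>k. Q k) < a" using k \<open>\<exists>k<a. Q k\<close> unfolding bounded_min_def by simp
  qed
  ultimately show ?thesis by simp
qed

lemma rec_pred_all:
  assumes P: "rec_pred (Suc n) (\<lambda>e. P (e 0) (\<lambda>i. e (Suc i)))" and a: "rec_fun n a"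
  shows "rec_pred n (\<lambda>e. \<forall>k<a e. P k e)"
proof -
  have "rec_pred n (\<lambda>e. \<not> (\<exists>k<a e. \<not> P k e))"
    by (intro rec_pred_not rec_pred_ex a P)
  then show ?thesis by simp
qed

lemma rec_fun_shift: "rec_fun n a \<Longrightarrow> rec_fun (Suc n) (\<lambda>e. a (\<lambda>i. e (Suc i)))"
proof -
  assume a: "rec_fun n a"
  have "rec_fun (Suc n) (\<lambda>e. a (\<lambda>j. (\<lambda>j e. e (Suc j)) j e))"
    by (rule rec_fun_comp[OF a]) (simp add: rec_fun_var)
  then show ?thesis by simp
qed

lemma primrec_env_triangle: "primrec_env (\<lambda>e. 0) (\<lambda>e. e (Suc 0) + Suc (e 0)) k e = triangle k"
  by (induction k) auto

lemma rec_fun_triangle_var: "rec_fun 1 (\<lambda>e. triangle (e 0))"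
proof -
  have "rec_fun (Suc 0) (\<lambda>e. primrec_env (\<lambda>e. 0) (\<lambda>e. e (Suc 0) + Suc (e 0)) (e 0) (\<lambda>i. e (Suc i)))"
    by (rule rec_fun_primrec_env) (auto intro!: rec_fun_zero rec_fun_add rec_fun_var rec_fun_Suc)
  then show ?thesis by (simp only: primrec_env_triangle One_nat_def)
qed

lemma rec_fun_triangle: "rec_fun n a \<Longrightarrow> rec_fun n (\<lambda>e. triangle (a e))"
  using rec_fun_comp1[OF rec_fun_triangle_var] by simp

lemma rec_fun_prod_encode: "rec_fun n a \<Longrightarrow> rec_fun n b \<Longrightarrow> rec_fun n (\<lambda>e. prod_encode (a e, b e))"
  unfolding prod_encode_def by (simp add: rec_fun_triangle rec_fun_add)

lemmas rec_arith_intros = rec_fun_var rec_fun_const rec_fun_Suc rec_fun_add rec_fun_sub rec_fun_mult rec_fun_if rec_fun_bounded_min rec_fun_triangle rec_fun_prod_encode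
  rec_pred_less rec_pred_not rec_pred_and rec_pred_or rec_pred_imp rec_pred_le rec_pred_eq rec_pred_const rec_pred_ex rec_pred_all

definition pfst :: "nat \<Rightarrow> nat" where "pfst m = fst (prod_decode m)"
definition psnd :: "nat \<Rightarrow> nat" where "psnd m = snd (prod_decode m)"

lemma pfst_psnd_simps[simp]: "pfst (prod_encode (x, y)) = x" "psnd (prod_encode (x, y)) = y"
  by (simp_all add: pfst_def psnd_def)

lemma prod_encode_pfst_psnd: "prod_encode (pfst m, psnd m) = m"
  by (simp add: pfst_def psnd_def)

lemma pfst_psnd_le: "pfst m \<le> m" "psnd m \<le> m"
  by (metis le_prod_encode_1 prod_encode_pfst_psnd, metis le_prod_encode_2 prod_encode_pfst_psnd)

lemma pfst_eq_bounded_min: "pfst m = bounded_min (Suc m) (\<lambda>x. \<exists>y<Suc m. prod_encode (x, y) = m)"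
proof -
  have ex: "\<exists>y<Suc m. prod_encode (pfst m, y) = m" using pfst_psnd_le prod_encode_pfst_psnd by (metis le_imp_less_Suc)
  have "(LEAST x. \<exists>y<Suc m. prod_encode (x, y) = m) = pfst m"
  proof (rule Least_equality)
    show "\<exists>y<Suc m. prod_encode (pfst m, y) = m" by (rule ex)
    fix x assume "\<exists>y<Suc m. prod_encode (x, y) = m"
    then obtain y where "prod_encode (x, y) = m" by blast
    then show "pfst m \<le> x" by auto
  qed
  moreover have "pfst m < Suc m" using pfst_psnd_le by (simp add: le_imp_less_Suc)
  ultimately show ?thesis using ex unfolding bounded_min_def by auto
qed

lemma psnd_eq_bounded_min: "psnd m = bounded_min (Suc m) (\<lambda>y. \<exists>x<Suc m. prod_encode (x, y) = m)"
proof -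
  have ex: "\<exists>x<Suc m. prod_encode (x, psnd m) = m" using pfst_psnd_le prod_encode_pfst_psnd by (metis le_imp_less_Suc)
  have "(LEAST y. \<exists>x<Suc m. prod_encode (x, y) = m) = psnd m"
  proof (rule Least_equality)
    show "\<exists>x<Suc m. prod_encode (x, psnd m) = m" by (rule ex)
    fix y assume "\<exists>x<Suc m. prod_encode (x, y) = m"
    then obtain x where "prod_encode (x, y) = m" by blast
    then show "psnd m \<le> y" by auto
  qed
  moreover have "psnd m < Suc m" using pfst_psnd_le by (simp add: le_imp_less_Suc)
  ultimately show ?thesis using ex unfolding bounded_min_def by auto
qed

lemma rec_fun_pfst_var: "rec_fun 1 (\<lambda>e. pfst (e 0))"
  unfolding pfst_eq_bounded_min by (intro rec_arith_intros) simp_all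

lemma rec_fun_psnd_var: "rec_fun 1 (\<lambda>e. psnd (e 0))"
  unfolding psnd_eq_bounded_min by (intro rec_arith_intros) simp_all

lemma rec_fun_pfst: "rec_fun n a \<Longrightarrow> rec_fun n (\<lambda>e. pfst (a e))"
  using rec_fun_comp1[OF rec_fun_pfst_var] by simp
lemma rec_fun_psnd: "rec_fun n a \<Longrightarrow> rec_fun n (\<lambda>e. psnd (a e))"
  using rec_fun_comp1[OF rec_fun_psnd_var] by simp

definition ltl :: "nat \<Rightarrow> nat" where "ltl c = (if c = 0 then 0 else psnd (c - 1))"
definition lhd :: "nat \<Rightarrow> nat" where "lhd c = pfst (c - 1)"
definition lcons :: "nat \<Rightarrow> nat \<Rightarrow> nat" where "lcons x c = Suc (prod_encode (x, c))"
definition litr :: "nat \<Rightarrow> nat \<Rightarrow> nat" where "litr c k = (ltl ^^ k) c"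
definition lnth :: "nat \<Rightarrow> nat \<Rightarrow> nat" where "lnth c k = lhd (litr c k)"
definition llen :: "nat \<Rightarrow> nat" where "llen c = bounded_min (Suc c) (\<lambda>k. litr c k = 0)"

lemma list_decode_Suc: "list_decode (Suc n) = pfst n # list_decode (psnd n)"
  by (simp add: pfst_def psnd_def split: prod.split)

declare list_decode.simps(2)[simp del]

lemma lcons_dec[simp]: "list_decode (lcons x c) = x # list_decode c"
  by (simp add: lcons_def list_decode_Suc)

lemma lcons_enc: "lcons x (list_encode xs) = list_encode (x # xs)"
  by (simp add: lcons_def)

lemma ltl_dec[simp]: "list_decode (ltl c) = tl (list_decode c)"
  by (cases c) (auto simp: ltl_def list_decode_Suc)

lemma lhd_eq: "c \<noteq> 0 \<Longrightarrow> lhd c = hd (list_decode c)"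
  by (cases c) (auto simp: lhd_def list_decode_Suc)

lemma list_decode_0_iff: "list_decode c = [] \<longleftrightarrow> c = 0"
  by (metis list_decode.simps(1) list_decode_inverse list_encode.simps(1))

lemma litr_dec: "list_decode (litr c k) = drop k (list_decode c)"
  by (induction k) (auto simp: litr_def drop_Suc tl_drop)

lemma lnth_eq: "k < length (list_decode c) \<Longrightarrow> lnth c k = list_decode c ! k"
proof -
  assume k: "k < length (list_decode c)"
  then have ne: "litr c k \<noteq> 0" using litr_dec[of c k] by (metis drop_eq_Nil leD list_decode.simps(1))
  then show ?thesis unfolding lnth_def using lhd_eq[OF ne] litr_dec[of c k] k by (simp add: hd_drop_conv_nth)
qed

lemma length_list_decode_le: "length (list_decode c) \<le> c"
proof (induction c rule: less_induct)
  case (less c)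
  show ?case
  proof (cases c)
    case 0 then show ?thesis by simp
  next
    case (Suc n)
    have "psnd n \<le> n" by (rule pfst_psnd_le)
    then show ?thesis using less[of "psnd n"] Suc by (simp add: list_decode_Suc)
  qed
qed

lemma llen_eq: "llen c = length (list_decode c)"
proof -
  have z: "litr c k = 0 \<longleftrightarrow> length (list_decode c) \<le> k" for k
    using litr_dec[of c k] list_decode_0_iff[of "litr c k"] by auto
  have "(LEAST k. litr c k = 0) = length (list_decode c)"
    by (rule Least_equality) (auto simp: z)
  moreover have "length (list_decode c) < Suc c" using length_list_decode_le by (simp add: le_imp_less_Suc)
  ultimately show ?thesis unfolding llen_def bounded_min_def using z by auto
qed

lemma rec_fun_ltl: "rec_fun n a \<Longrightarrow> rec_fun n (\<lambda>e. ltl (a e))"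
  unfolding ltl_def by (intro rec_arith_intros rec_fun_psnd) simp_all

lemma rec_fun_lhd: "rec_fun n a \<Longrightarrow> rec_fun n (\<lambda>e. lhd (a e))"
  unfolding lhd_def by (intro rec_arith_intros rec_fun_pfst) simp_all

lemma rec_fun_lcons: "rec_fun n a \<Longrightarrow> rec_fun n b \<Longrightarrow> rec_fun n (\<lambda>e. lcons (a e) (b e))"
  unfolding lcons_def by (intro rec_arith_intros) simp_all

lemma primrec_env_litr: "primrec_env (\<lambda>e. e 0) (\<lambda>e. ltl (e (Suc 0))) k e = litr (e 0) k"
  by (induction k) (auto simp: litr_def)

lemma rec_fun_litr2: "rec_fun 2 (\<lambda>e. litr (e 1) (e 0))"
proof -
  have "rec_fun (Suc 1) (\<lambda>e. primrec_env (\<lambda>e. e 0) (\<lambda>e. ltl (e (Suc 0))) (e 0) (\<lambda>i. e (Suc i)))"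
    by (rule rec_fun_primrec_env) (auto intro!: rec_fun_var rec_fun_ltl)
  then show ?thesis by (simp only: primrec_env_litr numeral_2_eq_2 One_nat_def)
qed

lemma rec_fun_litr: "rec_fun n a \<Longrightarrow> rec_fun n b \<Longrightarrow> rec_fun n (\<lambda>e. litr (a e) (b e))"
  using rec_fun_comp2[OF rec_fun_litr2, of n b a] by simp

lemma rec_fun_lnth: "rec_fun n a \<Longrightarrow> rec_fun n b \<Longrightarrow> rec_fun n (\<lambda>e. lnth (a e) (b e))"
  unfolding lnth_def by (intro rec_fun_lhd rec_fun_litr)

lemma rec_fun_llen: "rec_fun n a \<Longrightarrow> rec_fun n (\<lambda>e. llen (a e))"
  unfolding llen_def by (intro rec_arith_intros rec_fun_litr rec_fun_shift) simp_all

lemmas rec_intros = rec_arith_intros rec_fun_pfst rec_fun_psnd rec_fun_ltl rec_fun_lhd rec_fun_lcons rec_fun_lnth rec_fun_llen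

definition rec_partial :: "nat \<Rightarrow> ((nat \<Rightarrow> nat) \<Rightarrow> nat option) \<Rightarrow> bool" where
  "rec_partial n F \<longleftrightarrow> (\<exists>r. \<forall>e y. eval r (map e [0..<n]) y \<longleftrightarrow> F e = Some y)"

lemma list_all2_eval_Proj: "list_all2 (\<lambda>g y. eval g xs y) (map Proj [0..<length xs]) ys \<longleftrightarrow> ys = xs"
proof
  assume "list_all2 (\<lambda>g y. eval g xs y) (map Proj [0..<length xs]) ys"
  then have "length ys = length xs" "\<forall>i<length xs. eval (Proj i) xs (ys ! i)"
    by (auto simp: list_all2_conv_all_nth)
  then show "ys = xs" by (auto intro!: nth_equalityI elim: ProjE)
next
  assume "ys = xs"
  then show "list_all2 (\<lambda>g y. eval g xs y) (map Proj [0..<length xs]) ys"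
    by (auto simp: list_all2_conv_all_nth intro: eval_Proj)
qed

lemma eval_Comp_cons_Proj:
  "eval (Comp f (g # map Proj [0..<length xs])) xs y \<longleftrightarrow> (\<exists>k. eval g xs k \<and> eval f (k # xs) y)"
proof
  assume "eval (Comp f (g # map Proj [0..<length xs])) xs y"
  then obtain ys where "list_all2 (\<lambda>g y. eval g xs y) (g # map Proj [0..<length xs]) ys" "eval f ys y"
    by (blast elim: CompE)
  then show "\<exists>k. eval g xs k \<and> eval f (k # xs) y"
    by (auto simp: list_all2_Cons1 list_all2_eval_Proj)
next
  assume "\<exists>k. eval g xs k \<and> eval f (k # xs) y"
  then obtain k where "eval g xs k" "eval f (k # xs) y"
    by blast
  moreover from this(1) have "list_all2 (\<lambda>g y. eval g xs y) (g # map Proj [0..<length xs]) (k # xs)"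
    by (simp add: list_all2_eval_Proj)
  ultimately show "eval (Comp f (g # map Proj [0..<length xs])) xs y"
    by (intro eval_Comp)
qed

lemma eval_Mu_iff_least:
  assumes q: "\<And>k. eval q (k # xs) (if Q k then 0 else 1)"
  shows "eval (Mu q) xs k \<longleftrightarrow> Q k \<and> (\<forall>m<k. \<not> Q m)"
proof
  assume "eval (Mu q) xs k"
  then have zero: "eval q (k # xs) 0" and pos: "\<forall>m<k. \<exists>y. eval q (m # xs) (Suc y)"
    by (blast elim: MuE)+
  have "Q k"
    using eval_det[OF zero q[of k]] by (cases "Q k") auto
  moreover have "\<not> Q m" if "m < k" for m
  proof
    assume "Q m"
    from pos that obtain y where "eval q (m # xs) (Suc y)"
      by blast
    with \<open>Q m\<close> show False
      using eval_det[OF _ q[of m]] by fastforce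
  qed
  ultimately show "Q k \<and> (\<forall>m<k. \<not> Q m)"
    by blast
next
  assume least: "Q k \<and> (\<forall>m<k. \<not> Q m)"
  then have "eval q (m # xs) (Suc 0)" if "m < k" for m
    using q[of m] that by simp
  then show "eval (Mu q) xs k"
    using least q[of k] by (intro eval_Mu) auto
qed

lemma nat_least_iff: "(P k \<and> (\<forall>m<k. \<not> P m)) \<longleftrightarrow> (\<exists>j. P j) \<and> k = (LEAST j::nat. P j)"
  by (metis LeastI_ex Least_equality leI not_less_Least)

lemma rec_partial_least:
  assumes P: "rec_pred (Suc n) (\<lambda>e. P (e 0) (\<lambda>i. e (Suc i)))"
    and G: "rec_fun (Suc n) (\<lambda>e. G (e 0) (\<lambda>i. e (Suc i)))"
  shows "rec_partial n (\<lambda>e. if \<exists>k. P k e then Some (G (LEAST k. P k e) e) else None)"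
proof -
  obtain rQ where rQ0: "\<forall>e. eval rQ (map e [0..<Suc n]) (if \<not> P (e 0) (\<lambda>i. e (Suc i)) then 1 else 0)"
    using rec_pred_not[OF P] unfolding rec_pred_def rec_fun_def by blast
  have rQ: "eval rQ (k # map e [0..<n]) (if P k e then 0 else 1)" for k e
    using rQ0[rule_format, of "env_cons k e"] unfolding map_env_cons by (cases "P k e") auto
  obtain rG where rG0: "\<forall>e. eval rG (map e [0..<Suc n]) (G (e 0) (\<lambda>i. e (Suc i)))"
    using G unfolding rec_fun_def by blast
  have rG: "eval rG (k # map e [0..<n]) (G k e)" for k e
    using rG0[rule_format, of "env_cons k e"] unfolding map_env_cons by simp
  let ?r = "Comp rG (Mu rQ # map Proj [0..<n])"
  have ev: "eval ?r (map e [0..<n]) y \<longleftrightarrow> (\<exists>k. (P k e \<and> (\<forall>m<k. \<not> P m e)) \<and> y = G k e)" for e y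
    using eval_Comp_cons_Proj[of rG "Mu rQ" "map e [0..<n]" y] eval_Mu_iff_least[OF rQ]
      eval_det[OF _ rG] rG by auto
  have "eval ?r (map e [0..<n]) y \<longleftrightarrow>
      (if \<exists>k. P k e then Some (G (LEAST k. P k e) e) else None) = Some y" for e y
    unfolding ev nat_least_iff[of "\<lambda>k. P k e"] by auto
  then show ?thesis
    unfolding rec_partial_def by blast
qed

fun dec :: "nat \<Rightarrow> bstring" where
  "dec 0 = []"
| "dec (Suc n) = (if even n then False # dec (n div 2) else True # dec (n div 2))"

lemma enc_dec[simp]: "enc (dec n) = n"
  by (induction n rule: dec.induct) auto

lemma dec_enc[simp]: "dec (enc x) = x"
  by (induction x) auto

lemma enc_inj: "enc x = enc y \<longleftrightarrow> x = y"
  by (metis dec_enc)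

lemma machine_if_rec_partial: "rec_partial 1 (\<lambda>e. map_option enc (V (dec (e 0)))) \<Longrightarrow> machine V"
proof -
  assume "rec_partial 1 (\<lambda>e. map_option enc (V (dec (e 0))))"
  then obtain r where r: "\<And>e y. eval r (map e [0..<1]) y \<longleftrightarrow> map_option enc (V (dec (e 0))) = Some y"
    unfolding rec_partial_def by blast
  show ?thesis unfolding machine_def
  proof (rule exI[of _ r], intro allI)
    fix x m
    show "eval r [enc x] m \<longleftrightarrow> (\<exists>y. V x = Some y \<and> m = enc y)"
      using r[of "\<lambda>_. enc x" m] by auto
  qed
qed

definition computed_by :: "recf \<Rightarrow> (bstring \<Rightarrow> bstring option) \<Rightarrow> bool" where
  "computed_by r V \<longleftrightarrow> (\<forall>n m. eval r [n] m \<longleftrightarrow> V (dec n) = Some (dec m))"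

lemma computed_by_iff_machine_witness:
  "computed_by r V \<longleftrightarrow> (\<forall>x m. eval r [enc x] m \<longleftrightarrow> (\<exists>y. V x = Some y \<and> m = enc y))"
  unfolding computed_by_def by (metis dec_enc enc_dec)

lemma machine_iff_computed_by: "machine V \<longleftrightarrow> (\<exists>r. computed_by r V)"
  unfolding machine_def computed_by_iff_machine_witness ..

lemma rec_fun_total_computable: "total_computable h \<Longrightarrow> rec_fun 1 (\<lambda>e. enc (h (dec (e 0))))"
proof -
  assume "total_computable h"
  then obtain r where r: "\<And>x m. eval r [enc x] m \<longleftrightarrow> m = enc (h x)"
    unfolding total_computable_def machine_def by auto
  have "eval r (map e [0..<1]) (enc (h (dec (e 0))))" for e
    using r[of "dec (e 0)" "enc (h (dec (e 0)))"] by simp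
  then show ?thesis unfolding rec_fun_def by blast
qed

section \<open>Certificates for evaluation\<close>

fun code :: "recf \<Rightarrow> nat" where
  "code Zero = prod_encode (0, 0)"
| "code Succ = prod_encode (1, 0)"
| "code (Proj i) = prod_encode (2, i)"
| "code (Comp f gs) = prod_encode (3, prod_encode (code f, list_encode (map code gs)))"
| "code (Prim f g) = prod_encode (4, prod_encode (code f, code g))"
| "code (Mu f) = prod_encode (5, code f)"

text \<open>A node (c, x, y, a) claims eval f (list_decode x) y for the program f with code c. The
  auxiliary entry a is the coded list of intermediate values for a composition and the value at
  the predecessor for a primitive recursion step; node_ok S n says that the claim follows by one
  rule of eval from claims in S.\<close>

abbreviation node_code :: "nat \<Rightarrow> nat" where "node_code n \<equiv> pfst n"
abbreviation node_arg :: "nat \<Rightarrow> nat" where "node_arg n \<equiv> pfst (psnd n)"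
abbreviation node_val :: "nat \<Rightarrow> nat" where "node_val n \<equiv> pfst (psnd (psnd n))"
abbreviation node_aux :: "nat \<Rightarrow> nat" where "node_aux n \<equiv> psnd (psnd (psnd n))"

definition node :: "nat \<Rightarrow> nat \<Rightarrow> nat \<Rightarrow> nat \<Rightarrow> nat" where
  "node c x y a = prod_encode (c, prod_encode (x, prod_encode (y, a)))"

lemma node_simps[simp]: "node_code (node c x y a) = c" "node_arg (node c x y a) = x" "node_val (node c x y a) = y" "node_aux (node c x y a) = a"
  by (simp_all add: node_def)

definition node_ok :: "nat set \<Rightarrow> nat \<Rightarrow> bool" where
"node_ok S n \<longleftrightarrow> (let c = node_code n; x = node_arg n; y = node_val n; a = node_aux n; t = pfst c; d = psnd c; xs = list_decode x in
  (t = 0 \<and> y = 0) \<or>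
  (t = 1 \<and> xs \<noteq> [] \<and> y = Suc (hd xs)) \<or>
  (t = 2 \<and> d < length xs \<and> y = xs ! d) \<or>
  (t = 3 \<and> length (list_decode a) = length (list_decode (psnd d)) \<and>
     (\<forall>j<length (list_decode (psnd d)). \<exists>m\<in>S. node_code m = list_decode (psnd d) ! j \<and> node_arg m = x \<and> node_val m = list_decode a ! j) \<and>
     (\<exists>m\<in>S. node_code m = pfst d \<and> node_arg m = a \<and> node_val m = y)) \<or>
  (t = 4 \<and> xs \<noteq> [] \<and> ((hd xs = 0 \<and> (\<exists>m\<in>S. node_code m = pfst d \<and> node_arg m = ltl x \<and> node_val m = y)) \<or>
      (hd xs \<noteq> 0 \<and> (\<exists>m\<in>S. node_code m = c \<and> node_arg m = lcons (hd xs - 1) (ltl x) \<and> node_val m = a) \<and>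
         (\<exists>m\<in>S. node_code m = psnd d \<and> node_arg m = lcons (hd xs - 1) (lcons a (ltl x)) \<and> node_val m = y)))) \<or>
  (t = 5 \<and> (\<exists>m\<in>S. node_code m = d \<and> node_arg m = lcons y x \<and> node_val m = 0) \<and>
     (\<forall>k<y. \<exists>m\<in>S. node_code m = d \<and> node_arg m = lcons k x \<and> node_val m \<noteq> 0)))"

definition node_sound :: "nat \<Rightarrow> bool" where
  "node_sound m \<longleftrightarrow> (\<forall>f. code f = node_code m \<longrightarrow> eval f (list_decode (node_arg m)) (node_val m))"

lemma ltl_enc[simp]: "ltl (list_encode xs) = list_encode (tl xs)"
  by (metis list_decode_inverse ltl_dec list_encode_inverse)

lemma node_ok_sound:
  assumes S: "\<forall>m\<in>S. node_sound m" and ok: "node_ok S n"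
  shows "node_sound n"
  unfolding node_sound_def
proof (intro allI impI)
  fix f assume cf: "code f = node_code n"
  let ?x = "node_arg n" let ?y = "node_val n" let ?a = "node_aux n" let ?xs = "list_decode (node_arg n)"
  have semD: "m \<in> S \<Longrightarrow> code g = node_code m \<Longrightarrow> eval g (list_decode (node_arg m)) (node_val m)" for m g
    using S unfolding node_sound_def by blast
  show "eval f ?xs ?y"
  proof (cases f)
    case Zero
    then have "?y = 0" using ok cf unfolding node_ok_def Let_def by (auto simp flip: cf)
    then show ?thesis using Zero by (simp add: eval_Zero)
  next
    case Succ
    then have "?xs \<noteq> [] \<and> ?y = Suc (hd ?xs)" using ok cf unfolding node_ok_def Let_def by (auto simp flip: cf)
    then show ?thesis using Succ by (cases ?xs) (auto intro: eval_Succ)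
  next
    case (Proj i)
    then have "i < length ?xs \<and> ?y = ?xs ! i" using ok cf unfolding node_ok_def Let_def by (auto simp flip: cf)
    then show ?thesis using Proj by (metis eval_Proj)
  next
    case (Comp f0 gs)
    then have c: "length (list_decode ?a) = length gs"
      "\<forall>j<length gs. \<exists>m\<in>S. node_code m = code (gs ! j) \<and> node_arg m = ?x \<and> node_val m = list_decode ?a ! j"
      "\<exists>m\<in>S. node_code m = code f0 \<and> node_arg m = ?a \<and> node_val m = ?y"
      using ok cf unfolding node_ok_def Let_def by (auto simp flip: cf)
    have "list_all2 (\<lambda>g y. eval g ?xs y) gs (list_decode ?a)"
      unfolding list_all2_conv_all_nth using c(1,2) semD by (metis (no_types, lifting))
    moreover have "eval f0 (list_decode ?a) ?y" using c(3) semD by (metis list_encode_inverse)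
    ultimately show ?thesis using Comp by (auto intro: eval_Comp)
  next
    case (Prim f0 g0)
    then have c: "?xs \<noteq> [] \<and> ((hd ?xs = 0 \<and> (\<exists>m\<in>S. node_code m = code f0 \<and> node_arg m = ltl ?x \<and> node_val m = ?y)) \<or>
      (hd ?xs \<noteq> 0 \<and> (\<exists>m\<in>S. node_code m = code f \<and> node_arg m = lcons (hd ?xs - 1) (ltl ?x) \<and> node_val m = ?a) \<and>
         (\<exists>m\<in>S. node_code m = code g0 \<and> node_arg m = lcons (hd ?xs - 1) (lcons ?a (ltl ?x)) \<and> node_val m = ?y)))"
      using ok cf unfolding node_ok_def Let_def by (auto simp flip: cf)
    then obtain v vs where xs: "?xs = v # vs" by (cases ?xs) auto
    show ?thesis
    proof (cases v)
      case 0
      with c xs obtain m where "m \<in> S" "node_code m = code f0" "node_arg m = ltl ?x" "node_val m = ?y" by auto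
      then have "eval f0 vs ?y" using semD[of m f0] xs by simp
      then show ?thesis using xs 0 Prim by (auto intro: eval_Prim0)
    next
      case (Suc v')
      with c xs obtain m1 m2 where "m1 \<in> S" "node_code m1 = code f" "node_arg m1 = lcons v' (ltl ?x)" "node_val m1 = ?a"
        "m2 \<in> S" "node_code m2 = code g0" "node_arg m2 = lcons v' (lcons ?a (ltl ?x))" "node_val m2 = ?y" by auto
      then have "eval f (v' # vs) ?a" "eval g0 (v' # ?a # vs) ?y"
        using semD[of m1 f] semD[of m2 g0] xs by auto
      then show ?thesis using xs Suc Prim by (auto intro: eval_PrimS)
    qed
  next
    case (Mu f0)
    then have c: "(\<exists>m\<in>S. node_code m = code f0 \<and> node_arg m = lcons ?y ?x \<and> node_val m = 0) \<and>
     (\<forall>k<?y. \<exists>m\<in>S. node_code m = code f0 \<and> node_arg m = lcons k ?x \<and> node_val m \<noteq> 0)"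
      using ok cf unfolding node_ok_def Let_def by (auto simp flip: cf)
    have "eval f0 (?y # ?xs) 0" using c semD by fastforce
    moreover have "\<forall>k<?y. \<exists>z. eval f0 (k # ?xs) (Suc z)"
    proof (intro allI impI)
      fix k assume "k < ?y"
      then obtain m where "m \<in> S" "node_code m = code f0" "node_arg m = lcons k ?x" "node_val m \<noteq> 0" using c by blast
      then have "eval f0 (k # ?xs) (node_val m)" using semD[of m f0] by simp
      then show "\<exists>z. eval f0 (k # ?xs) (Suc z)" using \<open>node_val m \<noteq> 0\<close> by (metis not0_implies_Suc)
    qed
    ultimately show ?thesis using Mu by (auto intro: eval_Mu)
  qed
qed

definition valid_trace :: "nat list \<Rightarrow> bool" where
  "valid_trace L \<longleftrightarrow> (\<forall>i<length L. node_ok (set (take i L)) (L ! i))"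

lemma valid_trace_sound: "valid_trace L \<Longrightarrow> m \<in> set L \<Longrightarrow> node_sound m"
proof -
  assume v: "valid_trace L"
  have "\<forall>i. i < length L \<longrightarrow> node_sound (L ! i)"
  proof (intro allI)
    fix i show "i < length L \<longrightarrow> node_sound (L ! i)"
    proof (induction i rule: less_induct)
      case (less i)
      show ?case
      proof
        assume i: "i < length L"
        have "\<forall>m\<in>set (take i L). node_sound m"
          using less i by (auto simp: in_set_conv_nth)
        then show "node_sound (L ! i)" using node_ok_sound v i unfolding valid_trace_def by blast
      qed
    qed
  qed
  then show "m \<in> set L \<Longrightarrow> node_sound m" by (auto simp: in_set_conv_nth)
qed

lemma node_ok_mono: "node_ok S n \<Longrightarrow> S \<subseteq> T \<Longrightarrow> node_ok T n"
  unfolding node_ok_def Let_def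
  apply (elim disjE)
       apply (simp; fail)
      apply (simp; fail)
     apply (simp; fail)
    apply (rule disjI2, rule disjI2, rule disjI2, rule disjI1) apply blast
   apply (rule disjI2, rule disjI2, rule disjI2, rule disjI2, rule disjI1) apply blast
  apply (rule disjI2, rule disjI2, rule disjI2, rule disjI2, rule disjI2) apply blast
  done

declare list_encode.simps(2)[simp del]
declare lcons_enc[simp]

lemma valid_trace_Nil: "valid_trace []" by (simp add: valid_trace_def)

lemma valid_trace_append: "valid_trace A \<Longrightarrow> valid_trace B \<Longrightarrow> valid_trace (A @ B)"
  unfolding valid_trace_def
proof (intro allI impI)
  fix i assume A: "\<forall>i<length A. node_ok (set (take i A)) (A ! i)" and B: "\<forall>i<length B. node_ok (set (take i B)) (B ! i)"
    and i: "i < length (A @ B)"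
  show "node_ok (set (take i (A @ B))) ((A @ B) ! i)"
  proof (cases "i < length A")
    case True then show ?thesis using A by (simp add: nth_append)
  next
    case False
    then have "node_ok (set (take (i - length A) B)) (B ! (i - length A))" using B i by simp
    then show ?thesis using False by (auto simp: nth_append elim!: node_ok_mono)
  qed
qed

lemma valid_trace_snoc: "valid_trace L \<Longrightarrow> node_ok (set L) n \<Longrightarrow> valid_trace (L @ [n])"
  unfolding valid_trace_def by (auto simp: nth_append less_Suc_eq)

lemma valid_trace_collect:
  fixes k :: nat
  assumes "\<And>m. m < k \<Longrightarrow> \<exists>L. valid_trace L \<and> R m (set L)"
    and mono: "\<And>m S T. R m S \<Longrightarrow> S \<subseteq> T \<Longrightarrow> R m T"
  shows "\<exists>L. valid_trace L \<and> (\<forall>m<k. R m (set L))"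
  using assms(1)
proof (induction k)
  case 0 then show ?case using valid_trace_Nil by blast
next
  case (Suc k)
  then obtain L where L: "valid_trace L" "\<forall>m<k. R m (set L)" by auto
  obtain L' where L': "valid_trace L'" "R k (set L')" using Suc.prems by blast
  have "valid_trace (L @ L')" using L L' valid_trace_append by blast
  moreover have "\<forall>m<Suc k. R m (set (L @ L'))"
    using L L' mono by (auto simp: less_Suc_eq)
  ultimately show ?case by blast
qed

definition trace_has :: "nat set \<Rightarrow> nat \<Rightarrow> nat \<Rightarrow> nat \<Rightarrow> bool" where
  "trace_has S c x y \<longleftrightarrow> (\<exists>m\<in>S. node_code m = c \<and> node_arg m = x \<and> node_val m = y)"

lemma trace_has_mono: "trace_has S c x y \<Longrightarrow> S \<subseteq> T \<Longrightarrow> trace_has T c x y"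
  unfolding trace_has_def by blast

lemma trace_has_iff_node: "trace_has S c x y \<longleftrightarrow> (\<exists>a. node c x y a \<in> S)"
  unfolding trace_has_def by (metis node_def node_simps prod_encode_pfst_psnd)

lemma node_ok_Comp:
  assumes "length ys = length gs" "\<forall>j<length gs. trace_has S (code (gs!j)) x (ys!j)"
    "trace_has S (code f) (list_encode ys) z"
  shows "node_ok S (node (code (Comp f gs)) x z (list_encode ys))"
  unfolding node_ok_def Let_def
  apply (rule disjI2, rule disjI2, rule disjI2, rule disjI1)
  using assms by (simp add: trace_has_def)

lemma node_ok_Prim0:
  assumes "trace_has S (code f) (list_encode xs) y"
  shows "node_ok S (node (code (Prim f g)) (list_encode (0 # xs)) y a)"
  unfolding node_ok_def Let_def
  apply (rule disjI2, rule disjI2, rule disjI2, rule disjI2, rule disjI1)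
  using assms by (simp add: trace_has_def)

lemma node_ok_PrimS:
  assumes "trace_has S (code (Prim f g)) (list_encode (n # xs)) y" "trace_has S (code g) (list_encode (n # y # xs)) z"
  shows "node_ok S (node (code (Prim f g)) (list_encode (Suc n # xs)) z y)"
  unfolding node_ok_def Let_def
  apply (rule disjI2, rule disjI2, rule disjI2, rule disjI2, rule disjI1)
  using assms by (simp add: trace_has_def)

lemma node_ok_Mu:
  assumes "trace_has S (code f) (list_encode (n # xs)) 0"
    "\<forall>m<n. \<exists>v. trace_has S (code f) (list_encode (m # xs)) (Suc v)"
  shows "node_ok S (node (code (Mu f)) (list_encode xs) n a)"
  unfolding node_ok_def Let_def
  apply (rule disjI2, rule disjI2, rule disjI2, rule disjI2, rule disjI2)
  using assms by (fastforce simp: trace_has_def)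

lemma valid_trace_extend:
  assumes "valid_trace L" "node_ok (set L) (node c x y a)"
  shows "\<exists>L'. valid_trace L' \<and> trace_has (set L') c x y"
proof -
  have "valid_trace (L @ [node c x y a])"
    using assms by (rule valid_trace_snoc)
  then show ?thesis
    unfolding trace_has_iff_node by force
qed

lemma eval_imp_valid_trace: "eval f xs y \<Longrightarrow> \<exists>L. valid_trace L \<and> trace_has (set L) (code f) (list_encode xs) y"
proof (induction rule: eval.induct)
  case (eval_Zero xs)
  show ?case
    by (rule valid_trace_extend[OF valid_trace_Nil, where a = 0]) (simp add: node_ok_def)
next
  case (eval_Succ x xs)
  show ?case
    by (rule valid_trace_extend[OF valid_trace_Nil, where a = 0]) (simp add: node_ok_def list_decode_Suc)
next
  case (eval_Proj i xs)
  show ?case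
    by (rule valid_trace_extend[OF valid_trace_Nil, where a = 0]) (use eval_Proj in \<open>simp add: node_ok_def\<close>)
next
  case (eval_Comp xs gs ys f z)
  have len: "length ys = length gs"
    using eval_Comp.IH(1) by (simp add: list_all2_conv_all_nth)
  have "\<exists>L. valid_trace L \<and> (\<forall>j<length gs. trace_has (set L) (code (gs ! j)) (list_encode xs) (ys ! j))"
    by (rule valid_trace_collect)
      (use eval_Comp.IH(1) in \<open>auto simp: list_all2_conv_all_nth intro: trace_has_mono\<close>)
  then obtain L1 where L1: "valid_trace L1"
      "\<forall>j<length gs. trace_has (set L1) (code (gs ! j)) (list_encode xs) (ys ! j)"
    by blast
  obtain L2 where L2: "valid_trace L2" "trace_has (set L2) (code f) (list_encode ys) z"
    using eval_Comp.IH(2) by blast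
  have "node_ok (set (L1 @ L2)) (node (code (Comp f gs)) (list_encode xs) z (list_encode ys))"
    using L1(2) L2(2) len by (intro node_ok_Comp) (auto intro: trace_has_mono)
  then show ?case
    by (rule valid_trace_extend[OF valid_trace_append[OF L1(1) L2(1)]])
next
  case (eval_Prim0 f xs y g)
  then obtain L where L: "valid_trace L" "trace_has (set L) (code f) (list_encode xs) y"
    by blast
  from L(2) have "node_ok (set L) (node (code (Prim f g)) (list_encode (0 # xs)) y 0)"
    by (rule node_ok_Prim0)
  with L(1) show ?case
    by (rule valid_trace_extend)
next
  case (eval_PrimS f g n xs y z)
  then obtain L1 L2 where L1: "valid_trace L1" "trace_has (set L1) (code (Prim f g)) (list_encode (n # xs)) y"
    and L2: "valid_trace L2" "trace_has (set L2) (code g) (list_encode (n # y # xs)) z"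
    by blast
  have "node_ok (set (L1 @ L2)) (node (code (Prim f g)) (list_encode (Suc n # xs)) z y)"
    using L1(2) L2(2) by (intro node_ok_PrimS) (auto intro: trace_has_mono)
  then show ?case
    by (rule valid_trace_extend[OF valid_trace_append[OF L1(1) L2(1)]])
next
  case (eval_Mu f n xs)
  obtain L1 where L1: "valid_trace L1" "trace_has (set L1) (code f) (list_encode (n # xs)) 0"
    using eval_Mu.IH(1) by blast
  have "\<exists>L. valid_trace L \<and> (\<forall>m<n. \<exists>v. trace_has (set L) (code f) (list_encode (m # xs)) (Suc v))"
    by (rule valid_trace_collect) (use eval_Mu.IH(2) in \<open>blast intro: trace_has_mono\<close>)+
  then obtain L2 where L2: "valid_trace L2"
      "\<forall>m<n. \<exists>v. trace_has (set L2) (code f) (list_encode (m # xs)) (Suc v)"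
    by blast
  have "trace_has (set (L1 @ L2)) (code f) (list_encode (n # xs)) 0"
    using L1(2) by (rule trace_has_mono) simp
  moreover have "\<forall>m<n. \<exists>v. trace_has (set (L1 @ L2)) (code f) (list_encode (m # xs)) (Suc v)"
    using L2(2) trace_has_mono[of "set L2" _ _ _ "set (L1 @ L2)"] by (simp; blast)
  ultimately have "node_ok (set (L1 @ L2)) (node (code (Mu f)) (list_encode xs) n 0)"
    by (rule node_ok_Mu)
  then show ?case
    by (rule valid_trace_extend[OF valid_trace_append[OF L1(1) L2(1)]])
qed

definition cert :: "nat \<Rightarrow> nat \<Rightarrow> nat \<Rightarrow> nat \<Rightarrow> bool" where
  "cert c x y w \<longleftrightarrow> valid_trace (list_decode w) \<and> trace_has (set (list_decode w)) c x y"

theorem eval_cert: "eval f xs y \<longleftrightarrow> (\<exists>w. cert (code f) (list_encode xs) y w)"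
proof
  assume "eval f xs y"
  then obtain L where "valid_trace L" "trace_has (set L) (code f) (list_encode xs) y" using eval_imp_valid_trace by blast
  then show "\<exists>w. cert (code f) (list_encode xs) y w" unfolding cert_def
    by (intro exI[of _ "list_encode L"]) simp
next
  assume "\<exists>w. cert (code f) (list_encode xs) y w"
  then obtain w m where "valid_trace (list_decode w)" "m \<in> set (list_decode w)" "node_code m = code f"
    "node_arg m = list_encode xs" "node_val m = y" unfolding cert_def trace_has_def by blast
  then have "node_sound m" using valid_trace_sound by blast
  then show "eval f xs y" using \<open>node_code m = code f\<close> \<open>node_arg m = list_encode xs\<close> \<open>node_val m = y\<close>
    unfolding node_sound_def by auto
qed

definition node_ok_num :: "nat \<Rightarrow> nat \<Rightarrow> bool" where
"node_ok_num w i \<longleftrightarrow> (let n = lnth w i; c = node_code n; x = node_arg n; y = node_val n; a = node_aux n; t = pfst c; d = psnd c in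
  (t = 0 \<and> y = 0) \<or>
  (t = 1 \<and> x \<noteq> 0 \<and> y = Suc (lhd x)) \<or>
  (t = 2 \<and> d < llen x \<and> y = lnth x d) \<or>
  (t = 3 \<and> llen a = llen (psnd d) \<and>
     (\<forall>j<llen (psnd d). \<exists>k<i. node_code (lnth w k) = lnth (psnd d) j \<and> node_arg (lnth w k) = x \<and> node_val (lnth w k) = lnth a j) \<and>
     (\<exists>k<i. node_code (lnth w k) = pfst d \<and> node_arg (lnth w k) = a \<and> node_val (lnth w k) = y)) \<or>
  (t = 4 \<and> x \<noteq> 0 \<and> ((lhd x = 0 \<and> (\<exists>k<i. node_code (lnth w k) = pfst d \<and> node_arg (lnth w k) = ltl x \<and> node_val (lnth w k) = y)) \<or>
      (lhd x \<noteq> 0 \<and> (\<exists>k<i. node_code (lnth w k) = c \<and> node_arg (lnth w k) = lcons (lhd x - 1) (ltl x) \<and> node_val (lnth w k) = a) \<and>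
         (\<exists>k<i. node_code (lnth w k) = psnd d \<and> node_arg (lnth w k) = lcons (lhd x - 1) (lcons a (ltl x)) \<and> node_val (lnth w k) = y)))) \<or>
  (t = 5 \<and> (\<exists>k<i. node_code (lnth w k) = d \<and> node_arg (lnth w k) = lcons y x \<and> node_val (lnth w k) = 0) \<and>
     (\<forall>q<y. \<exists>k<i. node_code (lnth w k) = d \<and> node_arg (lnth w k) = lcons q x \<and> node_val (lnth w k) \<noteq> 0)))"

lemma bex_take_list_decode:
  assumes i: "i \<le> length (list_decode w)"
  shows "(\<exists>m\<in>set (take i (list_decode w)). Q m) = (\<exists>k<i. Q (lnth w k))"
proof
  assume "\<exists>m\<in>set (take i (list_decode w)). Q m"
  then obtain k where "k < length (take i (list_decode w))" "Q (take i (list_decode w) ! k)"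
    by (auto simp: in_set_conv_nth)
  then show "\<exists>k<i. Q (lnth w k)" using i by (auto simp: lnth_eq)
next
  assume "\<exists>k<i. Q (lnth w k)"
  then obtain k where k: "k < i" "Q (lnth w k)" by blast
  then have "take i (list_decode w) ! k \<in> set (take i (list_decode w))" using i by (intro nth_mem) simp
  moreover have "take i (list_decode w) ! k = lnth w k" using k i by (simp add: lnth_eq)
  ultimately show "\<exists>m\<in>set (take i (list_decode w)). Q m" using k by auto
qed

lemma hd_list_decode: "c \<noteq> 0 \<Longrightarrow> hd (list_decode c) = lhd c"
  by (simp add: lhd_eq)

lemma nth_list_decode: "j < llen c \<Longrightarrow> list_decode c ! j = lnth c j"
  by (simp add: lnth_eq llen_eq)

lemma node_ok_num_eq: "i < length (list_decode w) \<Longrightarrow> node_ok_num w i = node_ok (set (take i (list_decode w))) (list_decode w ! i)"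
  unfolding node_ok_num_def node_ok_def Let_def
  by (simp add: bex_take_list_decode lnth_eq[symmetric] llen_eq[symmetric] list_decode_0_iff hd_list_decode nth_list_decode cong: conj_cong)

definition cert_num :: "nat \<Rightarrow> nat \<Rightarrow> nat \<Rightarrow> nat \<Rightarrow> bool" where
  "cert_num c x y w \<longleftrightarrow> (\<forall>i<llen w. node_ok_num w i) \<and>
     (\<exists>k<llen w. node_code (lnth w k) = c \<and> node_arg (lnth w k) = x \<and> node_val (lnth w k) = y)"

lemma cert_num_cert: "cert_num c x y w = cert c x y w"
proof -
  have "(\<forall>i<llen w. node_ok_num w i) = valid_trace (list_decode w)"
    unfolding valid_trace_def by (simp add: node_ok_num_eq llen_eq)
  moreover have "(\<exists>k<llen w. node_code (lnth w k) = c \<and> node_arg (lnth w k) = x \<and> node_val (lnth w k) = y)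
     = trace_has (set (list_decode w)) c x y"
    using bex_take_list_decode[of "length (list_decode w)" w "\<lambda>m. node_code m = c \<and> node_arg m = x \<and> node_val m = y"]
    unfolding trace_has_def by (simp add: llen_eq)
  ultimately show ?thesis unfolding cert_num_def cert_def by simp
qed

lemma rec_pred_node_ok_num_vars: "rec_pred 2 (\<lambda>e. node_ok_num (e 0) (e 1))"
  unfolding node_ok_num_def Let_def by (intro rec_intros) simp_all

lemma rec_pred_node_ok_num: "rec_fun n a \<Longrightarrow> rec_fun n b \<Longrightarrow> rec_pred n (\<lambda>e. node_ok_num (a e) (b e))"
  using rec_fun_comp2[OF rec_pred_node_ok_num_vars[unfolded rec_pred_def], of n a b] unfolding rec_pred_def by simp

lemma rec_pred_cert_vars: "rec_pred 4 (\<lambda>e. cert (e 0) (e 1) (e 2) (e 3))"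
  unfolding cert_num_cert[symmetric] cert_num_def by (intro rec_intros rec_pred_node_ok_num) simp_all

lemma rec_pred_cert: "rec_fun n a \<Longrightarrow> rec_fun n b \<Longrightarrow> rec_fun n c \<Longrightarrow> rec_fun n d \<Longrightarrow> rec_pred n (\<lambda>e. cert (a e) (b e) (c e) (d e))"
proof -
  assume a: "rec_fun n a" and b: "rec_fun n b" and c: "rec_fun n c" and d: "rec_fun n d"
  have "rec_fun n (\<lambda>e. (\<lambda>e. if cert (e 0) (e 1) (e 2) (e 3) then 1 else 0)
     (\<lambda>j. (\<lambda>j::nat. if j = 0 then a else if j = 1 then b else if j = 2 then c else d) j e))"
    by (rule rec_fun_comp[OF rec_pred_cert_vars[unfolded rec_pred_def]]) (auto simp: a b c d less_Suc_eq numeral_eq_Suc)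
  then show ?thesis unfolding rec_pred_def by simp
qed

section \<open>The recursion theorem\<close>

fun const_recf :: "nat \<Rightarrow> recf" where
  "const_recf 0 = Zero"
| "const_recf (Suc b) = Comp Succ [const_recf b]"

lemma eval_const_recf: "eval (const_recf b) xs b"
  by (induction b) (auto intro!: eval_Zero eval_Comp eval_Succ)

fun const_code :: "nat \<Rightarrow> nat" where
  "const_code 0 = code Zero"
| "const_code (Suc b) = prod_encode (3, prod_encode (code Succ, lcons (const_code b) 0))"

lemma const_code_code: "const_code b = code (const_recf b)"
  by (induction b) (auto simp: lcons_def list_encode.simps)

lemma primrec_env_const_code: "primrec_env (\<lambda>e. code Zero) (\<lambda>e. prod_encode (3, prod_encode (code Succ, lcons (e (Suc 0)) 0))) k e = const_code k"
  by (induction k) auto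

lemma rec_fun_const_code: "rec_fun n a \<Longrightarrow> rec_fun n (\<lambda>e. const_code (a e))"
proof -
  assume a: "rec_fun n a"
  have "rec_fun (Suc 0) (\<lambda>e. primrec_env (\<lambda>e. code Zero) (\<lambda>e. prod_encode (3, prod_encode (code Succ, lcons (e (Suc 0)) 0))) (e 0) (\<lambda>i. e (Suc i)))"
    by (rule rec_fun_primrec_env) (intro rec_arith_intros rec_fun_lcons; simp)+
  then have "rec_fun 1 (\<lambda>e. const_code (e 0))" by (simp only: primrec_env_const_code One_nat_def)
  from rec_fun_comp1[OF this a] show ?thesis by simp
qed

lemma prod_encode_recf: "\<exists>rP. \<forall>a b. eval rP [a, b] (prod_encode (a, b))"
proof -
  have "rec_fun 2 (\<lambda>e. prod_encode (e 0, e 1))" by (intro rec_arith_intros) simp_all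
  then obtain r where r: "\<And>e. eval r (map e [0..<2]) (prod_encode (e 0, e 1))" unfolding rec_fun_def by blast
  have "eval r [a, b] (prod_encode (a, b))" for a b
    using r[of "\<lambda>i. if i = 0 then a else b"] by (simp add: numeral_2_eq_2)
  then show ?thesis by blast
qed

definition smn_code :: "nat \<Rightarrow> nat \<Rightarrow> nat \<Rightarrow> nat" where
  "smn_code p a b = prod_encode (3, prod_encode (a, lcons (prod_encode (3, prod_encode (p, lcons (const_code b) (lcons (code (Proj 0)) 0)))) 0))"

lemma smn_code_code: "smn_code (code rP) (code r) b = code (Comp r [Comp rP [const_recf b, Proj 0]])"
  by (simp add: smn_code_def const_code_code lcons_def list_encode.simps)

lemma rec_fun_smn_code: "rec_fun n a \<Longrightarrow> rec_fun n b \<Longrightarrow> rec_fun n (\<lambda>e. smn_code p (a e) (b e))"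
  unfolding smn_code_def by (intro rec_intros rec_fun_const_code)

lemma eval_smn:
  assumes rP: "\<forall>a b. eval rP [a, b] (prod_encode (a, b))"
  shows "eval (Comp r [Comp rP [const_recf b, Proj 0]]) [x] y \<longleftrightarrow> eval r [prod_encode (b, x)] y"
proof -
  have inner: "eval (Comp rP [const_recf b, Proj 0]) [x] (prod_encode (b, x))"
    using rP eval_const_recf[of b "[x]"] eval_Proj[of 0 "[x]"] by (auto intro!: eval_Comp)
  show ?thesis
  proof
    assume "eval (Comp r [Comp rP [const_recf b, Proj 0]]) [x] y"
    then obtain ys where "list_all2 (\<lambda>g y. eval g [x] y) [Comp rP [const_recf b, Proj 0]] ys" "eval r ys y"
      by (blast elim: CompE)
    then obtain v where "ys = [v]" "eval (Comp rP [const_recf b, Proj 0]) [x] v" "eval r ys y"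
      by (auto simp: list_all2_Cons1)
    then show "eval r [prod_encode (b, x)] y" using eval_det[OF inner] by metis
  next
    assume "eval r [prod_encode (b, x)] y"
    then show "eval (Comp r [Comp rP [const_recf b, Proj 0]]) [x] y"
      using inner by (auto intro!: eval_Comp)
  qed
qed

lemma rec_fun_unary_recf:
  assumes "rec_fun 1 (\<lambda>e. F (e 0))"
  obtains r where "\<And>m y. eval r [m] y \<longleftrightarrow> y = F m"
proof -
  obtain r where r: "\<And>e. eval r (map e [0..<1]) (F (e 0))"
    using assms unfolding rec_fun_def by blast
  have "eval r [m] (F m)" for m
    using r[of "\<lambda>_. m"] by simp
  then show ?thesis
    using that eval_det by blast
qed

text \<open>On input n the fixed point r runs rF on the pair (code rF, n), and rF applies G to the
  code of rF specialised to its own code, which is the code of r itself.\<close>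

theorem kleene_fixed_point:
  assumes "rec_fun 2 (\<lambda>e. G (e 0) (e 1))"
  obtains r where "\<And>n y. eval r [n] y \<longleftrightarrow> y = G (code r) n"
proof -
  obtain rP where rP: "\<forall>a b. eval rP [a, b] (prod_encode (a, b))"
    using prod_encode_recf by blast
  define p where "p = code rP"
  have "rec_fun 1 (\<lambda>e. smn_code p (pfst (e 0)) (pfst (e 0)))" "rec_fun 1 (\<lambda>e. psnd (e 0))"
    by (intro rec_fun_smn_code rec_intros; simp)+
  from rec_fun_comp2[OF assms this]
  have "rec_fun 1 (\<lambda>e. G (smn_code p (pfst (e 0)) (pfst (e 0))) (psnd (e 0)))"
    by simp
  then obtain rF where rF: "\<And>m y. eval rF [m] y \<longleftrightarrow> y = G (smn_code p (pfst m) (pfst m)) (psnd m)"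
    using rec_fun_unary_recf[of "\<lambda>m. G (smn_code p (pfst m) (pfst m)) (psnd m)"] by blast
  define r where "r = Comp rF [Comp rP [const_recf (code rF), Proj 0]]"
  have "code r = smn_code p (code rF) (code rF)"
    unfolding r_def p_def by (rule smn_code_code[symmetric])
  then have "eval r [n] y \<longleftrightarrow> y = G (code r) n" for n y
    unfolding r_def using eval_smn[OF rP] rF by simp
  then show ?thesis
    by (rule that)
qed

section \<open>The race machine\<close>

definition pad_num :: "nat \<Rightarrow> nat \<Rightarrow> nat" where
  "pad_num e n = ((\<lambda>k. 2 * k + 2) ^^ e) (2 * n + 1)"

lemma pad_num_enc: "pad_num e (enc x) = enc (replicate e True @ False # x)"
  by (induction e) (auto simp: pad_num_def)

lemma replicate_True_False_inj: "replicate e True @ False # s = replicate e' True @ False # s' \<Longrightarrow> e = e' \<and> s = s'"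
proof (induction e arbitrary: e')
  case 0 then show ?case by (cases e') auto
next
  case (Suc e) then show ?case by (cases e') auto
qed

lemma pad_num_inj: "pad_num e n = pad_num e' n' \<Longrightarrow> e = e' \<and> n = n'"
proof -
  assume "pad_num e n = pad_num e' n'"
  then have "enc (replicate e True @ False # dec n) = enc (replicate e' True @ False # dec n')"
    using pad_num_enc[of e "dec n"] pad_num_enc[of e' "dec n'"] by simp
  then have "e = e' \<and> dec n = dec n'" using replicate_True_False_inj enc_inj by blast
  then show ?thesis by (metis enc_dec)
qed

lemma primrec_env_pad_num: "primrec_env (\<lambda>e. 2 * e 0 + 1) (\<lambda>e. 2 * e (Suc 0) + 2) k e = pad_num k (e 0)"
  by (induction k) (auto simp: pad_num_def)

lemma rec_fun_pad_num_vars: "rec_fun 2 (\<lambda>e. pad_num (e 0) (e 1))"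
proof -
  have "rec_fun (Suc 1) (\<lambda>e. primrec_env (\<lambda>e. 2 * e 0 + 1) (\<lambda>e. 2 * e (Suc 0) + 2) (e 0) (\<lambda>i. e (Suc i)))"
    by (rule rec_fun_primrec_env) (intro rec_arith_intros; simp)+
  then have "rec_fun (Suc 1) (\<lambda>e. pad_num (e 0) (e (Suc 0)))" unfolding primrec_env_pad_num .
  then show ?thesis by (simp add: numeral_2_eq_2)
qed

lemma rec_fun_pad_num: "rec_fun n a \<Longrightarrow> rec_fun n b \<Longrightarrow> rec_fun n (\<lambda>e. pad_num (a e) (b e))"
  using rec_fun_comp2[OF rec_fun_pad_num_vars] by simp

lemma computed_by_cert:
  "computed_by r V \<Longrightarrow> (\<exists>w. cert (code r) (lcons n 0) m w) \<longleftrightarrow> V (dec n) = Some (dec m)"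
  using eval_cert[of r "[n]" m] by (simp add: computed_by_def lcons_def list_encode.simps)

text \<open>A witness T = (e, n, b, out, w1, z, w2) for input m = pad_num e n: for b = 0, w1 certifies
  that V maps n to out; for b = 1, w1 certifies that program e maps n to z and w2 that U maps z
  to out.\<close>

abbreviation race_prog :: "nat \<Rightarrow> nat" where "race_prog T \<equiv> pfst T"
abbreviation race_input :: "nat \<Rightarrow> nat" where "race_input T \<equiv> pfst (psnd T)"
abbreviation race_branch :: "nat \<Rightarrow> nat" where "race_branch T \<equiv> pfst (psnd (psnd T))"
abbreviation race_out :: "nat \<Rightarrow> nat" where "race_out T \<equiv> pfst (psnd (psnd (psnd T)))"
abbreviation race_cert1 :: "nat \<Rightarrow> nat" where "race_cert1 T \<equiv> pfst (psnd (psnd (psnd (psnd T))))"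
abbreviation race_mid :: "nat \<Rightarrow> nat" where "race_mid T \<equiv> pfst (psnd (psnd (psnd (psnd (psnd T)))))"
abbreviation race_cert2 :: "nat \<Rightarrow> nat" where "race_cert2 T \<equiv> psnd (psnd (psnd (psnd (psnd (psnd T)))))"

definition race_tuple :: "nat \<Rightarrow> nat \<Rightarrow> nat \<Rightarrow> nat \<Rightarrow> nat \<Rightarrow> nat \<Rightarrow> nat \<Rightarrow> nat" where
  "race_tuple a b c d e f g = prod_encode (a, prod_encode (b, prod_encode (c, prod_encode (d, prod_encode (e, prod_encode (f, g))))))"

lemma race_tuple_simps[simp]: "race_prog (race_tuple a b c d e f g) = a" "race_input (race_tuple a b c d e f g) = b" "race_branch (race_tuple a b c d e f g) = c"
  "race_out (race_tuple a b c d e f g) = d" "race_cert1 (race_tuple a b c d e f g) = e" "race_mid (race_tuple a b c d e f g) = f" "race_cert2 (race_tuple a b c d e f g) = g"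
  by (simp_all add: race_tuple_def)

definition race_witness :: "nat \<Rightarrow> nat \<Rightarrow> nat \<Rightarrow> nat \<Rightarrow> bool" where
  "race_witness cV cU T m \<longleftrightarrow> pad_num (race_prog T) (race_input T) = m \<and>
     ((race_branch T = 0 \<and> cert cV (lcons (race_input T) 0) (race_out T) (race_cert1 T)) \<or>
      (race_branch T = 1 \<and> cert (race_prog T) (lcons (race_input T) 0) (race_mid T) (race_cert1 T) \<and> cert cU (lcons (race_mid T) 0) (race_out T) (race_cert2 T)))"

text \<open>The second branch answers enc (True # dec out), which differs from U's output dec out.\<close>

definition race_output :: "nat \<Rightarrow> nat" where "race_output T = (if race_branch T = 0 then race_out T else 2 * race_out T + 2)"

definition race_num :: "nat \<Rightarrow> nat \<Rightarrow> nat \<Rightarrow> nat option" where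
  "race_num cV cU m = (if \<exists>T. race_witness cV cU T m then Some (race_output (LEAST T. race_witness cV cU T m)) else None)"

lemma race_witness_pad_num:
  "race_witness cV cU T (pad_num e n) \<Longrightarrow> race_prog T = e \<and> race_input T = n"
  unfolding race_witness_def using pad_num_inj by blast

definition race :: "nat \<Rightarrow> nat \<Rightarrow> bstring \<Rightarrow> bstring option" where
  "race cV cU x = map_option dec (race_num cV cU (enc x))"

lemma machine_race: "machine (race cV cU)"
proof (rule machine_if_rec_partial)
  have "rec_pred (Suc 1) (\<lambda>e. race_witness cV cU (e 0) (e (Suc 0)))"
    unfolding race_witness_def by (intro rec_intros rec_pred_cert rec_fun_pad_num; simp)
  moreover have "rec_fun (Suc 1) (\<lambda>e. race_output (e 0))"
    unfolding race_output_def by (intro rec_intros; simp)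
  ultimately have "rec_partial 1 (\<lambda>e. if \<exists>k. race_witness cV cU k (e 0)
      then Some (race_output (LEAST k. race_witness cV cU k (e 0))) else None)"
    by (rule rec_partial_least[where P = "\<lambda>k e. race_witness cV cU k (e 0)"])
  moreover have "map_option enc (race cV cU (dec n)) = (if \<exists>k. race_witness cV cU k n
      then Some (race_output (LEAST k. race_witness cV cU k n)) else None)" for n
    by (simp add: race_def race_num_def)
  ultimately show "rec_partial 1 (\<lambda>e. map_option enc (race cV cU (dec (e 0))))"
    by simp
qed

lemma race_SomeD:
  assumes V: "computed_by rV V" and U: "computed_by rU U" and E: "computed_by rE E"
    and race: "race (code rV) (code rU) (replicate (code rE) True @ False # x) = Some y"
  shows "V x = Some y \<or> (\<exists>z y'. E x = Some z \<and> U z = Some y' \<and> y' \<noteq> y)"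
proof -
  let ?R = "\<lambda>T. race_witness (code rV) (code rU) T (pad_num (code rE) (enc x))"
  define T where "T = (LEAST T. ?R T)"
  have ex: "\<exists>T. ?R T" and y: "y = dec (race_output T)"
    using race by (auto simp: race_def race_num_def T_def pad_num_enc split: if_splits)
  from ex have R: "?R T"
    unfolding T_def by (rule LeastI_ex)
  then have "race_prog T = code rE" "race_input T = enc x"
    by (auto dest: race_witness_pad_num)
  with R consider
      (V) "race_branch T = 0" "cert (code rV) (lcons (enc x) 0) (race_out T) (race_cert1 T)"
    | (EU) "race_branch T = 1" "cert (code rE) (lcons (enc x) 0) (race_mid T) (race_cert1 T)"
        "cert (code rU) (lcons (race_mid T) 0) (race_out T) (race_cert2 T)"
    unfolding race_witness_def by auto
  then show ?thesis
  proof cases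
    case V
    then have "V x = Some (dec (race_out T))"
      using computed_by_cert[OF assms(1), of "enc x" "race_out T"] by auto
    then show ?thesis
      using V y by (simp add: race_output_def)
  next
    case EU
    have "E x = Some (dec (race_mid T))" "U (dec (race_mid T)) = Some (dec (race_out T))"
      using EU computed_by_cert[OF E, of "enc x" "race_mid T"]
        computed_by_cert[OF U, of "race_mid T" "race_out T"] by auto
    moreover have "dec (race_out T) \<noteq> y"
      using EU y by (auto simp: race_output_def dest: arg_cong[of _ _ enc])
    ultimately show ?thesis
      by blast
  qed
qed

lemma race_NoneD:
  assumes V: "computed_by rV V" and U: "computed_by rU U" and E: "computed_by rE E"
    and race: "race (code rV) (code rU) (replicate (code rE) True @ False # x) = None"
  shows "V x = None" and "E x = Some z \<Longrightarrow> U z = None"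
proof -
  let ?R = "\<lambda>T. race_witness (code rV) (code rU) T (pad_num (code rE) (enc x))"
  have no_witness: "\<not> ?R T" for T
    using race by (auto simp: race_def race_num_def pad_num_enc split: if_splits)
  show "V x = None"
  proof (rule ccontr)
    assume "V x \<noteq> None"
    then obtain y where "V x = Some y"
      by blast
    then obtain w where "cert (code rV) (lcons (enc x) 0) (enc y) w"
      using computed_by_cert[OF V, of "enc x" "enc y"] by auto
    then have "?R (race_tuple (code rE) (enc x) 0 (enc y) w 0 0)"
      unfolding race_witness_def by simp
    then show False
      using no_witness by blast
  qed
  assume "E x = Some z"
  then obtain w1 where w1: "cert (code rE) (lcons (enc x) 0) (enc z) w1"
    using computed_by_cert[OF E, of "enc x" "enc z"] by auto
  show "U z = None"
  proof (rule ccontr)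
    assume "U z \<noteq> None"
    then obtain y where "U z = Some y"
      by blast
    then obtain w2 where "cert (code rU) (lcons (enc z) 0) (enc y) w2"
      using computed_by_cert[OF U, of "enc z" "enc y"] by auto
    with w1 have "?R (race_tuple (code rE) (enc x) 1 (enc y) w1 (enc z) w2)"
      unfolding race_witness_def by simp
    then show False
      using no_witness by blast
  qed
qed

text \<open>If the translation g of the race machine is computed by the program rE whose code sits
  in the padding, the branch that refutes U cannot win, so U agrees with V on g x.\<close>

lemma race_diagonal:
  assumes V: "computed_by rV V" and U: "computed_by rU U" and E: "computed_by rE (\<lambda>x. Some (g x))"
    and translates: "race (code rV) (code rU) (replicate (code rE) True @ False # x) \<noteq> None \<Longrightarrow>
      U (g x) = race (code rV) (code rU) (replicate (code rE) True @ False # x)"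
  shows "V x = U (g x)"
proof (cases "race (code rV) (code rU) (replicate (code rE) True @ False # x)")
  case None
  then show ?thesis
    using race_NoneD[OF V U E] by simp
next
  case (Some y)
  then show ?thesis
    using race_SomeD[OF V U E Some] translates by auto
qed

lemma length_bounded_append:
  assumes "length_bounded h"
  shows "length_bounded (\<lambda>x. h (p @ x))"
proof -
  obtain c where c: "\<And>x. length (h x) \<le> length x + c"
    using assms unfolding length_bounded_def by blast
  have "length (h (p @ x)) \<le> length x + (length p + c)" for x
    using c[of "p @ x"] by simp
  then show ?thesis
    unfolding length_bounded_def by blast
qed

theorem proposition2p9:
  fixes U :: "bstring \<Rightarrow> bstring option"
  assumes "machine U"
    and "\<forall>V. machine V \<longrightarrow>
           (\<exists>h. total_computable h \<and> length_bounded h \<and>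
                (\<forall>x. V x \<noteq> None \<longrightarrow> U (h x) = V x))"
  shows "effectively_optimal U"
  unfolding effectively_optimal_def
proof (intro allI impI)
  fix V
  assume "machine V"
  then obtain rV rU where rV: "computed_by rV V" and rU: "computed_by rU U"
    using assms(1) by (auto simp: machine_iff_computed_by)
  obtain h where h_tc: "total_computable h" and h_lb: "length_bounded h"
    and h_race: "\<And>w. race (code rV) (code rU) w \<noteq> None \<Longrightarrow> U (h w) = race (code rV) (code rU) w"
    using assms(2) machine_race by blast
  have "rec_fun 2 (\<lambda>e. enc (h (dec (pad_num (e 0) (e 1)))))"
    using rec_fun_comp1[OF rec_fun_total_computable[OF h_tc] rec_fun_pad_num_vars] by simp
  then obtain r where r: "\<And>n y. eval r [n] y \<longleftrightarrow> y = enc (h (dec (pad_num (code r) n)))"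
    using kleene_fixed_point[of "\<lambda>e n. enc (h (dec (pad_num e n)))"] by blast
  define H where "H x = h ((replicate (code r) True @ [False]) @ x)" for x
  have "dec (pad_num (code r) n) = replicate (code r) True @ False # dec n" for n
    using pad_num_enc[of "code r" "dec n"] by simp
  then have r_H: "computed_by r (\<lambda>x. Some (H x))"
    unfolding computed_by_def r H_def by auto
  show "\<exists>h. total_computable h \<and> length_bounded h \<and> (\<forall>x. V x = U (h x))"
  proof (intro exI conjI allI)
    show "total_computable H"
      using r_H by (auto simp: total_computable_def machine_iff_computed_by)
    show "length_bounded H"
      unfolding H_def using h_lb by (rule length_bounded_append)
    show "V x = U (H x)" for x
      using race_diagonal[OF rV rU r_H] h_race by (simp add: H_def)
  qed
qed

end
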